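(* There is a deterministic Congested Clique algorithm which computes a proper $O(a^2)$-vertex-coloring of an input graph $G$ with arboricity $a\ge 2$ within $O(\log a+\log^* n)$ rounds.
   Context: Congested Clique model: there are $n$ processors (vertices) with distinct IDs of $O(\log n)$ bits; computation proceeds in synchronous rounds; in each round every pair of vertices may exchange a message of $O(\log n)$ bits; local computation is free. The input is a graph $G=(V,E')$ on the same vertex set; each vertex initially knows its incident edges in $G$, and $a$ is known to all vertices. The arboricity of a graph is the minimum number of forests whose union covers its edge set. A proper $k$-coloring is a map $\varphi:V\to\{1,\dots,k\}$ with $\varphi(u)\ne\varphi(v)$ for every edge $\{u,v\}$. $\log^* n$ is the number of times $\log_2$ must be iterated starting from $n$ until the value is below $2$. *)

theory Defs
  imports Complex_Main
begin

definition simple_graph :: "nat set \<Rightarrow> nat set set \<Rightarrow> bool" where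
  "simple_graph V E \<longleftrightarrow> (\<forall>e\<in>E. e \<subseteq> V \<and> card e = 2)"

definition nbrs :: "nat set set \<Rightarrow> nat \<Rightarrow> nat set" where
  "nbrs E u = {w. {u, w} \<in> E}"

definition is_cycle :: "nat set set \<Rightarrow> nat list \<Rightarrow> bool" where
  "is_cycle F vs \<longleftrightarrow> length vs \<ge> 3 \<and> distinct vs \<and>
     (\<forall>i < length vs. {vs ! i, vs ! ((i + 1) mod length vs)} \<in> F)"

definition forest :: "nat set set \<Rightarrow> bool" where
  "forest F \<longleftrightarrow> finite F \<and> \<not> (\<exists>vs. is_cycle F vs)"

definition arboricity :: "nat set set \<Rightarrow> nat" where
  "arboricity E = (LEAST k. \<exists>Fs :: nat \<Rightarrow> nat set set.
      (\<forall>i<k. forest (Fs i)) \<and> E = (\<Union>i<k. Fs i))"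

definition proper_coloring :: "nat set \<Rightarrow> nat set set \<Rightarrow> (nat \<Rightarrow> nat) \<Rightarrow> nat \<Rightarrow> bool" where
  "proper_coloring V E \<phi> k \<longleftrightarrow> (\<forall>v\<in>V. \<phi> v \<in> {1..k}) \<and>
     (\<forall>u v. {u, v} \<in> E \<longrightarrow> \<phi> u \<noteq> \<phi> v)"

definition log_star :: "nat \<Rightarrow> nat" where
  "log_star n = (LEAST i. ((\<lambda>x. log 2 x) ^^ i) (real n) < 2)"

text \<open>Vertices are identified with their IDs (natural numbers). A deterministic
  algorithm is given by a message function
  send n a V id N hist dest : the message (a natural number, 0 = no message)
  that vertex id sends to vertex dest, given n, a, the ID set V, its own ID,
  its neighbour set N in G and its history hist of received messages
  (one function sender-ID -> message per elapsed round).
  Local computation is free, so the whole local view is the state.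
  cc_hist send a V E r v is the history of v after r rounds.\<close>

type_synonym cc_send = "nat \<Rightarrow> nat \<Rightarrow> nat set \<Rightarrow> nat \<Rightarrow> nat set \<Rightarrow> (nat \<Rightarrow> nat) list \<Rightarrow> nat \<Rightarrow> nat"
type_synonym cc_out = "nat \<Rightarrow> nat \<Rightarrow> nat set \<Rightarrow> nat \<Rightarrow> nat set \<Rightarrow> (nat \<Rightarrow> nat) list \<Rightarrow> nat"

fun cc_hist :: "cc_send \<Rightarrow> nat \<Rightarrow> nat set \<Rightarrow> nat set set \<Rightarrow> nat \<Rightarrow> nat \<Rightarrow> (nat \<Rightarrow> nat) list" where
  "cc_hist send a V E 0 v = []"
| "cc_hist send a V E (Suc r) v = cc_hist send a V E r v @
     [\<lambda>u. if u \<in> V \<and> u \<noteq> v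
          then send (card V) a V u (nbrs E u) (cc_hist send a V E r u) v else 0]"

end

theory Submission
  imports Defs
begin

text \<open>Split the vertices by rank modulo \<open>a\<close> into \<open>a\<close> groups of at most \<open>\<lceil>n/a\<rceil>\<close> vertices.
  A graph of arboricity \<open>a\<close> has at most \<open>a\<close> times as many edges as vertices on every vertex set,
  so each group induces at most \<open>2n\<close> edges. After every vertex announces how many in-group
  edges it owns, prefix sums give each such edge a position in its group's list; the edge at
  position \<open>t\<close> travels through the vertex of rank \<open>t mod n\<close> to the group's leader, which
  receives the whole group in two rounds. The induced graph is \<open>2a\<close>-degenerate, so the leader
  colours it greedily with \<open>2a + 1\<close> colours and sends each member its colour; pairing colour and
  group index gives a proper colouring with \<open>a(2a + 1) \<le> 5a\<^sup>2\<close> colours after five rounds.\<close>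

section \<open>Sparse graphs are degenerate\<close>

definition graph_path :: "nat set set \<Rightarrow> nat set \<Rightarrow> nat list \<Rightarrow> bool" where
  "graph_path F S ps \<longleftrightarrow> ps \<noteq> [] \<and> distinct ps \<and> set ps \<subseteq> S \<and>
     (\<forall>i. Suc i < length ps \<longrightarrow> {ps ! i, ps ! Suc i} \<in> F)"

lemma longest_graph_path_exists:
  assumes "finite S" "S \<noteq> {}"
  obtains ps where "graph_path F S ps" "\<And>qs. graph_path F S qs \<Longrightarrow> length qs \<le> length ps"
proof -
  let ?P = "{ps. graph_path F S ps}"
  have "?P \<subseteq> {xs. set xs \<subseteq> S \<and> length xs \<le> card S}"
    using assms(1) by (auto simp: graph_path_def distinct_card[symmetric] intro: card_mono)
  hence fin: "finite (length ` ?P)" using finite_lists_length_le[OF assms(1)] finite_subset by blast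
  obtain v where "v \<in> S" using assms(2) by blast
  hence "[v] \<in> ?P" by (simp add: graph_path_def)
  hence "Max (length ` ?P) \<in> length ` ?P" using fin by (intro Max_in) auto
  then obtain ps where "ps \<in> ?P" "length ps = Max (length ` ?P)" by (metis imageE)
  with fin show ?thesis by (intro that) auto
qed

lemma graph_path_snoc:
  assumes "graph_path F S ps" "z \<in> S" "z \<notin> set ps" "{last ps, z} \<in> F"
  shows "graph_path F S (ps @ [z])"
  unfolding graph_path_def
proof (intro conjI allI impI)
  fix i assume i: "Suc i < length (ps @ [z])"
  show "{(ps @ [z]) ! i, (ps @ [z]) ! Suc i} \<in> F"
  proof (cases "Suc i < length ps")
    case True
    thus ?thesis using assms(1) by (simp add: graph_path_def nth_append)
  next
    case False
    hence "i = length ps - 1" "ps \<noteq> []" using i assms(1) by (auto simp: graph_path_def)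
    thus ?thesis using assms(4) by (simp add: nth_append last_conv_nth)
  qed
qed (use assms in \<open>auto simp: graph_path_def\<close>)

lemma graph_path_back_edge_cycle:
  assumes "graph_path F S ps" "j + 3 \<le> length ps" "{last ps, ps ! j} \<in> F"
  shows "is_cycle F (drop j ps)"
  unfolding is_cycle_def
proof (intro conjI allI impI)
  let ?vs = "drop j ps"
  fix i assume i: "i < length ?vs"
  show "{?vs ! i, ?vs ! ((i + 1) mod length ?vs)} \<in> F"
  proof (cases "Suc i < length ?vs")
    case True
    thus ?thesis using assms(1) by (simp add: graph_path_def)
  next
    case False
    hence last: "Suc i = length ?vs" using i by simp
    have "j + i = length ps - 1" "ps \<noteq> []" using last assms(2) by auto
    hence "?vs ! i = last ps" by (simp add: last_conv_nth)
    with last show ?thesis using assms(2,3) by (simp add: insert_commute)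
  qed
qed (use assms in \<open>auto simp: graph_path_def\<close>)

text \<open>Longest-path argument: all edges at the end of a longest path lead back into it, and
  the second such edge closes a cycle.\<close>
lemma cycle_if_min_degree_two:
  assumes "finite S" "S \<noteq> {}" "finite F" and edges: "\<forall>e\<in>F. card e = 2"
    and deg: "\<forall>v\<in>S. 1 < card {e\<in>F. e \<subseteq> S \<and> v \<in> e}"
  shows "\<exists>vs. is_cycle F vs"
proof -
  obtain ps where ps: "graph_path F S ps"
    and longest: "\<And>qs. graph_path F S qs \<Longrightarrow> length qs \<le> length ps"
    using longest_graph_path_exists[OF assms(1,2)] by blast
  define l where "l = last ps"
  have l: "l \<in> S" "l = ps ! (length ps - 1)"
    using ps by (auto simp: graph_path_def l_def last_conv_nth)
  have on_path: "z \<in> set ps" if "{l, z} \<in> F" "z \<in> S" for z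
  proof (rule ccontr)
    assume "z \<notin> set ps"
    hence "graph_path F S (ps @ [z])" using graph_path_snoc ps that l_def by blast
    thus False using longest by fastforce
  qed
  let ?A = "{e\<in>F. e \<subseteq> S \<and> l \<in> e}"
  have "\<not> card ?A \<le> Suc 0" using deg l(1) by auto
  moreover have "card ?A \<le> Suc 0 \<longleftrightarrow> (\<forall>x\<in>?A. \<forall>y\<in>?A. x = y)"
    using assms(3) by (intro card_le_Suc0_iff_eq) simp
  ultimately obtain e1 e2 where e: "e1 \<in> F" "e2 \<in> F" "e1 \<noteq> e2" "e1 \<subseteq> S" "e2 \<subseteq> S" "l \<in> e1" "l \<in> e2"
    by blast
  have "\<exists>x. e = {l, x} \<and> x \<noteq> l" if "e \<in> F" "l \<in> e" for e
    using edges that by (fastforce simp: card_2_iff)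
  then obtain x y where xy: "e1 = {l, x}" "e2 = {l, y}" "x \<noteq> l" "y \<noteq> l" "x \<noteq> y"
    using e by metis
  hence "x \<in> set ps" "y \<in> set ps" using on_path e by auto
  then obtain z where z: "z \<in> set ps" "z \<noteq> l" "{l, z} \<in> F" "z \<noteq> ps ! (length ps - 2)"
    using xy e by (metis doubleton_eq_iff)
  obtain j where j: "j < length ps" "ps ! j = z" using z(1) by (auto simp: in_set_conv_nth)
  have "j \<noteq> length ps - 1" "j \<noteq> length ps - 2" using j z l by auto
  hence "j + 3 \<le> length ps" using j by linarith
  thus ?thesis using graph_path_back_edge_cycle[OF ps] j z l_def by blast
qed

lemma forest_edges_within_le_card:
  assumes forest: "forest F" and edges: "\<forall>e\<in>F. card e = 2" and "finite S"
  shows "card {e\<in>F. e \<subseteq> S} \<le> card S"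
  using \<open>finite S\<close>
proof (induction "card S" arbitrary: S rule: less_induct)
  case less
  have finF: "finite F" using forest by (simp add: forest_def)
  show ?case
  proof (cases "\<exists>v\<in>S. card {e\<in>F. e \<subseteq> S \<and> v \<in> e} \<le> 1")
    case True
    then obtain v where v: "v \<in> S" "card {e\<in>F. e \<subseteq> S \<and> v \<in> e} \<le> 1" by blast
    have "{e\<in>F. e \<subseteq> S} \<subseteq> {e\<in>F. e \<subseteq> S - {v}} \<union> {e\<in>F. e \<subseteq> S \<and> v \<in> e}" by auto
    hence "card {e\<in>F. e \<subseteq> S} \<le> card ({e\<in>F. e \<subseteq> S - {v}} \<union> {e\<in>F. e \<subseteq> S \<and> v \<in> e})"
      using finF by (intro card_mono) auto
    also have "\<dots> \<le> card {e\<in>F. e \<subseteq> S - {v}} + card {e\<in>F. e \<subseteq> S \<and> v \<in> e}"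
      by (rule card_Un_le)
    also have "\<dots> \<le> card (S - {v}) + 1"
    proof -
      have "card (S - {v}) < card S" using less.prems v(1) by (rule card_Diff1_less)
      hence "card {e\<in>F. e \<subseteq> S - {v}} \<le> card (S - {v})" using less.hyps less.prems by blast
      thus ?thesis using v(2) by linarith
    qed
    also have "\<dots> = card S"
      using v(1) less.prems card_gt_0_iff[of S] by (auto simp: card_Diff_singleton)
    finally show ?thesis .
  next
    case False
    show ?thesis
    proof (cases "S = {}")
      case True
      hence "{e\<in>F. e \<subseteq> S} = {}" using edges by fastforce
      thus ?thesis by (metis card.empty zero_le)
    next
      case nonempty: False
      have "\<exists>vs. is_cycle F vs"
        using cycle_if_min_degree_two[OF less.prems nonempty finF edges] False by (simp add: not_le)
      thus ?thesis using forest by (simp add: forest_def)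
    qed
  qed
qed

lemma forest_singleton: "forest {e}"
  unfolding forest_def
proof (intro conjI notI)
  assume "\<exists>vs. is_cycle {e} vs"
  then obtain vs where vs: "length vs \<ge> 3" "distinct vs"
    "\<forall>i<length vs. {vs ! i, vs ! ((i + 1) mod length vs)} = e"
    by (auto simp: is_cycle_def)
  have "vs \<noteq> []" using vs(1) by auto
  hence "{vs ! 0, vs ! 1} = e" "{vs ! 1, vs ! 2} = e"
    using vs(1) vs(3)[rule_format, of 0] vs(3)[rule_format, of 1] by (auto simp: numeral_2_eq_2)
  moreover have "vs ! 0 \<noteq> vs ! 1" "vs ! 0 \<noteq> vs ! 2"
    using vs(1,2) \<open>vs \<noteq> []\<close> nth_eq_iff_index_eq[of vs 0 1] nth_eq_iff_index_eq[of vs 0 2]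
    by auto
  ultimately show False by (auto simp: doubleton_eq_iff)
qed simp

lemma arboricity_forest_cover:
  assumes "finite E"
  shows "\<exists>Fs. (\<forall>i<arboricity E. forest (Fs i)) \<and> E = (\<Union>i<arboricity E. Fs i)"
    and arboricity_le_card: "arboricity E \<le> card E"
proof -
  obtain h where h: "bij_betw h {0..<card E} E" using ex_bij_betw_nat_finite[OF assms] ..
  have "E = (\<Union>i<card E. {h i})" using bij_betw_imp_surj_on[OF h] by (auto simp: atLeast0LessThan)
  hence cover: "\<exists>Fs. (\<forall>i<card E. forest (Fs i)) \<and> E = (\<Union>i<card E. Fs i)"
    using forest_singleton by (intro exI[of _ "\<lambda>i. {h i}"]) simp
  show "\<exists>Fs. (\<forall>i<arboricity E. forest (Fs i)) \<and> E = (\<Union>i<arboricity E. Fs i)"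
    unfolding arboricity_def by (rule LeastI_ex) (use cover in blast)
  show "arboricity E \<le> card E"
    unfolding arboricity_def by (rule Least_le) (use cover in blast)
qed

lemma edges_within_le_arboricity:
  assumes "finite E" "\<forall>e\<in>E. card e = 2" "finite S"
  shows "card {e\<in>E. e \<subseteq> S} \<le> arboricity E * card S"
proof -
  obtain Fs where Fs: "\<forall>i<arboricity E. forest (Fs i)" "E = (\<Union>i<arboricity E. Fs i)"
    using arboricity_forest_cover(1)[OF assms(1)] by blast
  have "{e\<in>E. e \<subseteq> S} = (\<Union>i<arboricity E. {e\<in>Fs i. e \<subseteq> S})" using Fs(2) by auto
  hence "card {e\<in>E. e \<subseteq> S} \<le> (\<Sum>i<arboricity E. card {e\<in>Fs i. e \<subseteq> S})"
    using card_UN_le[of "{..<arboricity E}" "\<lambda>i. {e\<in>Fs i. e \<subseteq> S}"] by simp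
  also have "\<dots> \<le> (\<Sum>i<arboricity E. card S)"
    using assms Fs by (intro sum_mono forest_edges_within_le_card) auto
  finally show ?thesis by simp
qed

lemma low_degree_vertex_exists:
  assumes "finite T" "T \<noteq> {}" and edges: "\<forall>e\<in>E. card e = 2"
    and sparse: "card {e\<in>E. e \<subseteq> T} \<le> a * card T"
  shows "\<exists>v\<in>T. card {w\<in>T. {v, w} \<in> E} \<le> 2 * a"
proof (rule ccontr)
  let ?ET = "{e\<in>E. e \<subseteq> T}"
  let ?ends = "\<lambda>e. {p. {fst p, snd p} = e}"
  have ends: "finite (?ends e) \<and> card (?ends e) \<le> 2" if "e \<in> E" for e
  proof -
    have "card e = 2" using edges that by blast
    then obtain x y where "e = {x, y}" by (auto simp: card_2_iff)
    hence sub: "?ends e \<subseteq> {(x, y), (y, x)}" by (auto simp: doubleton_eq_iff)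
    have "card (?ends e) \<le> card {(x, y), (y, x)}" by (rule card_mono[OF _ sub]) simp
    also have "\<dots> \<le> 2" by (cases "x = y") simp_all
    finally show ?thesis using finite_subset[OF sub] by simp
  qed
  have "?ET \<subseteq> Pow T" by blast
  hence finET: "finite ?ET" using assms(1) finite_subset by blast
  assume "\<not> ?thesis"
  hence "(\<Sum>v\<in>T. 2 * a + 1) \<le> (\<Sum>v\<in>T. card {w\<in>T. {v, w} \<in> E})"
    by (intro sum_mono) (simp add: not_le Suc_le_eq)
  also have "\<dots> = card (SIGMA v:T. {w\<in>T. {v, w} \<in> E})" using assms(1) by simp
  also have "\<dots> \<le> card (\<Union>e\<in>?ET. ?ends e)"
  proof (rule card_mono)
    show "finite (\<Union>e\<in>?ET. ?ends e)" using finET ends by blast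
    show "(SIGMA v:T. {w\<in>T. {v, w} \<in> E}) \<subseteq> (\<Union>e\<in>?ET. ?ends e)" by auto
  qed
  also have "\<dots> \<le> (\<Sum>e\<in>?ET. card (?ends e))" using card_UN_le[OF finET] .
  also have "\<dots> \<le> (\<Sum>e\<in>?ET. 2)" using ends by (intro sum_mono) auto
  also have "\<dots> \<le> (\<Sum>v\<in>T. 2 * a)" using sparse by (simp add: mult.commute)
  finally have "(2 * a + 1) * card T \<le> 2 * a * card T" by simp
  thus False using assms(1,2) by simp
qed

lemma sparse_graph_colorable:
  assumes edges: "\<forall>e\<in>E. card e = 2"
    and sparse: "\<forall>T. finite T \<longrightarrow> card {e\<in>E. e \<subseteq> T} \<le> a * card T"
    and "finite S"
  shows "\<exists>col. (\<forall>u\<in>S. col u < 2 * a + 1) \<and> (\<forall>u\<in>S. \<forall>w\<in>S. {u, w} \<in> E \<longrightarrow> col u \<noteq> col w)"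
  using \<open>finite S\<close>
proof (induction "card S" arbitrary: S rule: less_induct)
  case less
  show ?case
  proof (cases "S = {}")
    case False
    obtain v where v: "v \<in> S" "card {w\<in>S. {v, w} \<in> E} \<le> 2 * a"
      using low_degree_vertex_exists[OF less.prems False edges] sparse less.prems by blast
    have "card (S - {v}) < card S" using v(1) less.prems by (intro card_Diff1_less)
    then obtain col where col: "\<forall>u\<in>S - {v}. col u < 2 * a + 1"
      "\<forall>u\<in>S - {v}. \<forall>w\<in>S - {v}. {u, w} \<in> E \<longrightarrow> col u \<noteq> col w"
      using less.hyps[of "S - {v}"] less.prems by blast
    let ?taken = "col ` {w\<in>S. {v, w} \<in> E}"
    have "card ?taken < card {..<2 * a + 1}"
      using v(2) card_image_le[of "{w\<in>S. {v, w} \<in> E}" col] less.prems by simp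
    hence "\<not> {..<2 * a + 1} \<subseteq> ?taken"
      using card_mono[of ?taken "{..<2 * a + 1}"] less.prems by auto
    then obtain k where k: "k < 2 * a + 1" "k \<notin> ?taken" by blast
    have loop_free: "{v, v} \<notin> E" using edges by force
    have "(col(v := k)) u \<noteq> (col(v := k)) w" if "u \<in> S" "w \<in> S" "{u, w} \<in> E" for u w
    proof -
      consider "u = v" | "w = v" | "u \<noteq> v" "w \<noteq> v" by blast
      thus ?thesis
      proof cases
        case 1
        hence "w \<noteq> v" "{v, w} \<in> E" using that loop_free by auto
        thus ?thesis using 1 k that by auto
      next
        case 2
        hence "u \<noteq> v" "{v, u} \<in> E" using that loop_free by (auto simp: insert_commute)
        thus ?thesis using 2 k that by auto
      qed (use col that in simp)
    qed
    moreover have "(col(v := k)) u < 2 * a + 1" if "u \<in> S" for u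
      using col k that by simp
    ultimately show ?thesis by blast
  qed simp
qed

section \<open>Prefix-sum blocks, ranks and message encodings\<close>

definition block_start :: "nat set \<Rightarrow> (nat \<Rightarrow> nat) \<Rightarrow> nat \<Rightarrow> nat" where
  "block_start P f u = sum f {w\<in>P. w < u}"

definition block_owner :: "nat set \<Rightarrow> (nat \<Rightarrow> nat) \<Rightarrow> nat \<Rightarrow> nat" where
  "block_owner P f t = (THE u. u \<in> P \<and> block_start P f u \<le> t \<and> t < block_start P f u + f u)"

lemma block_start_cong: "\<forall>u\<in>P. g u = f u \<Longrightarrow> block_start P g = block_start P f"
  unfolding block_start_def by (intro ext sum.cong) auto

lemma block_owner_cong: "\<forall>u\<in>P. g u = f u \<Longrightarrow> block_owner P g = block_owner P f"
  unfolding block_owner_def using block_start_cong[of P g f] by (intro ext arg_cong[where f = The]) auto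

lemma block_end_le_start:
  assumes "finite P" "u \<in> P" "w \<in> P" "u < w"
  shows "block_start P f u + f u \<le> block_start P f w"
proof -
  have "block_start P f u + f u = sum f (insert u {x\<in>P. x < u})"
    using assms(1) by (simp add: block_start_def)
  also have "\<dots> \<le> block_start P f w"
    unfolding block_start_def by (rule sum_mono2) (use assms in auto)
  finally show ?thesis .
qed

lemma block_end_le_sum:
  assumes "finite P" "u \<in> P"
  shows "block_start P f u + f u \<le> sum f P"
proof -
  have "block_start P f u + f u = sum f (insert u {x\<in>P. x < u})"
    using assms(1) by (simp add: block_start_def)
  also have "\<dots> \<le> sum f P" by (rule sum_mono2) (use assms in auto)
  finally show ?thesis .
qed

lemma block_owner_eqI:
  assumes "finite P" "u \<in> P" "block_start P f u \<le> t" "t < block_start P f u + f u"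
  shows "block_owner P f t = u"
  unfolding block_owner_def
proof (rule the_equality)
  fix w assume w: "w \<in> P \<and> block_start P f w \<le> t \<and> t < block_start P f w + f w"
  show "w = u"
    using block_end_le_start[OF assms(1) w[THEN conjunct1] assms(2), where f = f]
      block_end_le_start[OF assms(1,2) w[THEN conjunct1], where f = f] assms(3,4) w
    by (cases w u rule: linorder_cases) auto
qed (use assms in simp)

lemma block_covering:
  assumes "finite P" "t < sum f P"
  shows "\<exists>u\<in>P. block_start P f u \<le> t \<and> t < block_start P f u + f u"
  using assms
proof (induction P rule: finite_linorder_max_induct)
  case (insert b P)
  have start: "block_start (insert b P) f u = block_start P f u" if "u \<in> P" for u
    using insert.hyps(2) that unfolding block_start_def by (intro sum.cong) auto
  have "block_start (insert b P) f b = sum f P"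
    using insert.hyps(2) unfolding block_start_def by (intro sum.cong) auto
  moreover have "b \<notin> P" using insert.hyps(2) by blast
  ultimately show ?case
    using insert start by (cases "t < sum f P") force+
qed simp

lemma block_owner_spec:
  assumes "finite P" "t < sum f P"
  shows "block_owner P f t \<in> P" "block_start P f (block_owner P f t) \<le> t"
    "t < block_start P f (block_owner P f t) + f (block_owner P f t)"
  using block_covering[OF assms] block_owner_eqI[OF assms(1)] by metis+

definition vertex_of_rank :: "nat set \<Rightarrow> nat \<Rightarrow> nat" where
  "vertex_of_rank V = (SOME h. bij_betw h {..<card V} V)"

definition rank :: "nat set \<Rightarrow> nat \<Rightarrow> nat" where
  "rank V = the_inv_into {..<card V} (vertex_of_rank V)"

lemma bij_betw_vertex_of_rank:
  assumes "finite V"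
  shows "bij_betw (vertex_of_rank V) {..<card V} V"
proof -
  obtain h where "bij_betw h {0..<card V} V" using ex_bij_betw_nat_finite[OF assms] ..
  hence "\<exists>h. bij_betw h {..<card V} V" by (auto simp: atLeast0LessThan)
  thus ?thesis unfolding vertex_of_rank_def by (rule someI_ex)
qed

lemma rank_less_card: "finite V \<Longrightarrow> u \<in> V \<Longrightarrow> rank V u < card V"
  unfolding rank_def using bij_betw_the_inv_into[OF bij_betw_vertex_of_rank] bij_betwE by fastforce

lemma vertex_of_rank_rank: "finite V \<Longrightarrow> u \<in> V \<Longrightarrow> vertex_of_rank V (rank V u) = u"
  unfolding rank_def using bij_betw_vertex_of_rank by (metis bij_betw_def f_the_inv_into_f)

lemma rank_vertex_of_rank: "finite V \<Longrightarrow> q < card V \<Longrightarrow> rank V (vertex_of_rank V q) = q"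
  unfolding rank_def using bij_betw_vertex_of_rank by (metis bij_betw_def lessThan_iff the_inv_into_f_f)

lemma vertex_of_rank_in: "finite V \<Longrightarrow> q < card V \<Longrightarrow> vertex_of_rank V q \<in> V"
  using bij_betw_vertex_of_rank bij_betwE by blast

lemma card_residue_class_le:
  assumes "inj_on r P" "\<forall>u\<in>P. r u < n \<and> r u mod a = i" "a > 0"
  shows "card P * a \<le> n + a - 1"
proof -
  let ?h = "\<lambda>p. a * (r (fst p) div a) + snd p"
  have "inj_on ?h (P \<times> {..<a})"
  proof (rule inj_onI)
    fix p q assume p: "p \<in> P \<times> {..<a}" and q: "q \<in> P \<times> {..<a}" and eq: "?h p = ?h q"
    have "?h p div a = r (fst p) div a" "?h q div a = r (fst q) div a"
      "?h p mod a = snd p" "?h q mod a = snd q"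
      using p q assms(3) by auto
    hence "r (fst p) div a = r (fst q) div a" "snd p = snd q" using eq by metis+
    moreover have "r (fst p) mod a = r (fst q) mod a" using assms(2) p q by auto
    ultimately have "r (fst p) = r (fst q)" by (metis div_mult_mod_eq)
    hence "fst p = fst q" using assms(1) p q by (auto dest: inj_onD)
    thus "p = q" using \<open>snd p = snd q\<close> by (simp add: prod_eq_iff)
  qed
  moreover have "?h ` (P \<times> {..<a}) \<subseteq> {..<n + a - 1}"
  proof
    fix x assume "x \<in> ?h ` (P \<times> {..<a})"
    then obtain u s where "u \<in> P" "s < a" "x = a * (r u div a) + s" by auto
    moreover have "a * (r u div a) \<le> r u" by simp
    moreover have "r u < n" using assms(2) \<open>u \<in> P\<close> by blast
    ultimately have "x < n + a - 1" by linarith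
    thus "x \<in> {..<n + a - 1}" by simp
  qed
  ultimately have "card (P \<times> {..<a}) \<le> n + a - 1"
    using card_inj_on_le[of ?h _ "{..<n + a - 1}"] by simp
  moreover have "r ` P \<subseteq> {..<n}" using assms(2) by auto
  hence "finite P" using assms(1) finite_subset finite_imageD by blast
  ultimately show ?thesis by (simp add: card_cartesian_product)
qed

lemma mod_diff_residues:
  assumes "(n::nat) > 0" "s \<le> t"
  shows "(t mod n + n - s mod n) mod n = (t - s) mod n"
proof -
  obtain d where t: "t = s + d" using assms(2) le_Suc_ex by blast
  have tm: "t mod n = (s mod n + d mod n) mod n" unfolding t by (simp add: mod_add_eq)
  have bounds: "s mod n < n" "d mod n < n" using assms(1) by simp_all
  show ?thesis
  proof (cases "s mod n + d mod n < n")
    case True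
    hence "t mod n + n - s mod n = d mod n + n" using tm by simp
    thus ?thesis using t by simp
  next
    case False
    have "s mod n + d mod n - n < n" using bounds by linarith
    hence "(s mod n + d mod n) mod n = s mod n + d mod n - n" using False by (simp add: le_mod_geq)
    hence "t mod n + n - s mod n = d mod n" using tm False by simp
    thus ?thesis using t by simp
  qed
qed

text \<open>The offset keeps codes apart from 0, which stands for ``no message''.\<close>
definition pair_code :: "nat \<Rightarrow> nat \<Rightarrow> nat \<Rightarrow> nat" where
  "pair_code W x y = x * W + y + 1"

definition pair_decode :: "nat \<Rightarrow> nat \<Rightarrow> nat \<times> nat" where
  "pair_decode W m = ((m - 1) div W, (m - 1) mod W)"

lemma pair_decode_code: "y < W \<Longrightarrow> pair_decode W (pair_code W x y) = (x, y)"
  by (simp add: pair_decode_def pair_code_def)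

lemma pair_code_le: "x < W \<Longrightarrow> y < W \<Longrightarrow> pair_code W x y \<le> W * W"
proof -
  assume "x < W" "y < W"
  hence "x * W + (y + 1) \<le> (W - 1) * W + W" by (intro add_mono mult_le_mono1) auto
  also have "\<dots> = W * W" using \<open>x < W\<close> by (cases W) auto
  finally show ?thesis by (simp add: pair_code_def)
qed

lemma length_cc_hist: "length (cc_hist send a V E k v) = k"
  by (induction k) auto

lemma nth_cc_hist:
  "m < k \<Longrightarrow> cc_hist send a V E k v ! m =
     (\<lambda>u. if u \<in> V \<and> u \<noteq> v then send (card V) a V u (nbrs E u) (cc_hist send a V E m u) v else 0)"
proof (induction k)
  case (Suc k)
  show ?case
  proof (cases "m < k")
    case True
    thus ?thesis using Suc by (simp add: nth_append length_cc_hist)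
  next
    case False
    hence "m = k" using Suc.prems by simp
    thus ?thesis unfolding \<open>m = k\<close> by (simp add: nth_append length_cc_hist)
  qed
qed simp

section \<open>The algorithm\<close>

definition group :: "nat set \<Rightarrow> nat \<Rightarrow> nat \<Rightarrow> nat" where
  "group V a u = rank V u mod a"

definition group_members :: "nat set \<Rightarrow> nat \<Rightarrow> nat \<Rightarrow> nat set" where
  "group_members V a i = {u\<in>V. group V a u = i}"

text \<open>Each edge inside a group is owned by its endpoint with the smaller ID.\<close>
definition fwd_nbrs :: "nat set \<Rightarrow> nat \<Rightarrow> nat set \<Rightarrow> nat \<Rightarrow> nat set" where
  "fwd_nbrs V a N u = {w\<in>N. w \<in> V \<and> group V a w = group V a u \<and> u < w}"

definition fwd_list :: "nat set \<Rightarrow> nat \<Rightarrow> nat set \<Rightarrow> nat \<Rightarrow> nat list" where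
  "fwd_list V a N u = sorted_list_of_set (fwd_nbrs V a N u)"

text \<open>A vertex never receives its own round-0 message, so it uses its own count directly.\<close>
definition known_counts :: "nat set \<Rightarrow> nat \<Rightarrow> nat \<Rightarrow> nat set \<Rightarrow> (nat \<Rightarrow> nat) list \<Rightarrow> nat \<Rightarrow> nat" where
  "known_counts V a x N hist = (\<lambda>u. if u = x then card (fwd_nbrs V a N x) else (hist ! 0) u)"

definition relay_value ::
  "nat set \<Rightarrow> nat \<Rightarrow> (nat \<Rightarrow> nat) \<Rightarrow> nat \<Rightarrow> nat \<Rightarrow> nat set \<Rightarrow> (nat \<Rightarrow> nat) \<Rightarrow> nat \<Rightarrow> nat \<Rightarrow> nat" where
  "relay_value V a cnt W x N round1 i t = (let P = group_members V a i; u = block_owner P cnt t in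
     if u = x then pair_code W x (fwd_list V a N x ! (t - block_start P cnt x)) else round1 u)"

definition leader_value ::
  "nat set \<Rightarrow> nat \<Rightarrow> (nat \<Rightarrow> nat) \<Rightarrow> nat \<Rightarrow> nat \<Rightarrow> nat set \<Rightarrow> (nat \<Rightarrow> nat) list \<Rightarrow> nat \<Rightarrow> nat \<Rightarrow> nat" where
  "leader_value V a cnt W x N hist i t = (let z = vertex_of_rank V (t mod card V) in
     if z = x then relay_value V a cnt W x N (hist ! 1) i t else (hist ! (2 + t div card V)) z)"

definition collected_edges ::
  "nat set \<Rightarrow> nat \<Rightarrow> nat \<Rightarrow> nat \<Rightarrow> nat set \<Rightarrow> (nat \<Rightarrow> nat) list \<Rightarrow> (nat \<times> nat) set" where
  "collected_edges V a W x N hist = (let i = rank V x; cnt = known_counts V a x N hist in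
     (\<lambda>t. pair_decode W (leader_value V a cnt W x N hist i t)) ` {..<sum cnt (group_members V a i)})"

definition some_coloring :: "nat set \<Rightarrow> (nat \<times> nat) set \<Rightarrow> nat \<Rightarrow> nat \<Rightarrow> nat" where
  "some_coloring S D k = (SOME col. (\<forall>u\<in>S. col u < k) \<and> (\<forall>p\<in>D. col (fst p) \<noteq> col (snd p)))"

definition leader_coloring :: "nat set \<Rightarrow> nat \<Rightarrow> nat \<Rightarrow> nat \<Rightarrow> nat set \<Rightarrow> (nat \<Rightarrow> nat) list \<Rightarrow> nat \<Rightarrow> nat" where
  "leader_coloring V a W x N hist =
     some_coloring (group_members V a (rank V x)) (collected_edges V a W x N hist) (2 * a + 1)"

text \<open>Round 1: send the owned edge at
  position \<open>t\<close> of the group's edge list to the vertex of rank \<open>t mod n\<close>. Rounds 2 and 3: forward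
  positions \<open>rank + (r - 2) n\<close> of group \<open>i\<close> to its leader, the vertex of rank \<open>i\<close>.
  Round 4: each leader sends every member of its group its colour plus one.\<close>
definition coloring_send :: "nat \<Rightarrow> cc_send" where
  "coloring_send c n a V x N hist y = (let W = (max 2 n) ^ c; cnt = known_counts V a x N hist;
     f = card (fwd_nbrs V a N x); r = length hist in
     if r = 0 then f
     else if r = 1 then
       (let j = (rank V y + n - block_start (group_members V a (group V a x)) cnt x mod n) mod n in
        if j < f then pair_code W x (fwd_list V a N x ! j) else 0)
     else if r = 2 \<or> r = 3 then
       (let i = rank V y; t = rank V x + (r - 2) * n in
        if i < a \<and> t < sum cnt (group_members V a i) then relay_value V a cnt W x N (hist ! 1) i t
        else 0)
     else if r = 4 then
       (if rank V x < a \<and> group V a y = rank V x then leader_coloring V a W x N hist y + 1 else 0)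
     else 0)"

definition coloring_out :: "nat \<Rightarrow> cc_out" where
  "coloring_out c n a V v N hist = (let i = group V a v;
     col = (if rank V v < a then leader_coloring V a ((max 2 n) ^ c) v N hist v
            else (hist ! 4) (vertex_of_rank V i) - 1)
     in i * (2 * a + 1) + col + 1)"

section \<open>Correctness of a run\<close>

locale coloring_run =
  fixes c :: nat and V :: "nat set" and E :: "nat set set" and a :: nat
  assumes finite_V: "finite V" and V_nonempty: "V \<noteq> {}"
    and ids_bounded: "V \<subseteq> {..< (max 2 (card V)) ^ c}"
    and simple: "simple_graph V E" and arboricity: "arboricity E = a" and two_le_a: "2 \<le> a"
begin

abbreviation "n \<equiv> card V"
abbreviation "W \<equiv> (max 2 n) ^ c"
abbreviation "P i \<equiv> group_members V a i"
abbreviation "hist k v \<equiv> cc_hist (coloring_send c) a V E k v"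
abbreviation "counts_at x k \<equiv> known_counts V a x (nbrs E x) (hist k x)"

definition fwd :: "nat \<Rightarrow> nat set" where "fwd u = fwd_nbrs V a (nbrs E u) u"
definition cnt :: "nat \<Rightarrow> nat" where "cnt u = card (fwd u)"

abbreviation "start i u \<equiv> block_start (P i) cnt u"
abbreviation "owner i t \<equiv> block_owner (P i) cnt t"
abbreviation "edge_count i \<equiv> sum cnt (P i)"
abbreviation "flist u \<equiv> fwd_list V a (nbrs E u) u"

declare cc_hist.simps(2) [simp del]

lemma edge_card: "e \<in> E \<Longrightarrow> card e = 2"
  and edge_subset: "e \<in> E \<Longrightarrow> e \<subseteq> V"
  using simple by (auto simp: simple_graph_def)

lemma edge_ends: "{u, w} \<in> E \<Longrightarrow> u \<in> V \<and> w \<in> V \<and> u \<noteq> w"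
  using edge_card edge_subset by fastforce

lemma finite_E: "finite E"
  using finite_V edge_subset by (meson Pow_iff finite_Pow_iff finite_subset subsetI)

lemma n_pos: "n > 0"
  using finite_V V_nonempty by (simp add: card_gt_0_iff)

lemma mem_fwd: "w \<in> fwd u \<longleftrightarrow> {u, w} \<in> E \<and> w \<in> V \<and> group V a w = group V a u \<and> u < w"
  by (simp add: fwd_def fwd_nbrs_def nbrs_def)

lemma fwd_subset: "fwd u \<subseteq> V - {u}"
  by (auto simp: mem_fwd)

lemma finite_fwd: "finite (fwd u)"
  using fwd_subset finite_V finite_subset by blast

lemma cnt_less_n: "u \<in> V \<Longrightarrow> cnt u < n"
  unfolding cnt_def using fwd_subset finite_V card_mono card_Diff1_less
  by (metis finite_Diff le_less_trans)

lemma group_less: "group V a u < a"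
  using two_le_a by (simp add: group_def)

lemma finite_P: "finite (P i)"
  using finite_V by (simp add: group_members_def)

lemma flist_eq: "flist u = sorted_list_of_set (fwd u)"
  by (simp add: fwd_list_def fwd_def)

lemma length_flist: "length (flist u) = cnt u"
  using finite_fwd by (simp add: flist_eq cnt_def)

lemma nth_flist_in_fwd: "j < cnt u \<Longrightarrow> flist u ! j \<in> fwd u"
  using length_flist finite_fwd flist_eq by (metis nth_mem set_sorted_list_of_set)

lemma ids_less_W: "u \<in> V \<Longrightarrow> u < W"
  using ids_bounded by auto

lemma hist_nth:
  "m < k \<Longrightarrow> hist k x ! m =
     (\<lambda>u. if u \<in> V \<and> u \<noteq> x then coloring_send c n a V u (nbrs E u) (hist m u) x else 0)"
  by (rule nth_cc_hist)

lemma length_hist [simp]: "length (hist k x) = k"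
  by (rule length_cc_hist)

lemma known_counts_eq:
  assumes "1 \<le> k" "x \<in> V"
  shows "\<forall>u\<in>V. counts_at x k u = cnt u"
proof
  fix u assume "u \<in> V"
  have "coloring_send c n a V u (nbrs E u) [] x = cnt u"
    by (simp add: coloring_send_def cnt_def fwd_def)
  thus "counts_at x k u = cnt u"
    using hist_nth[of 0 k x] assms \<open>u \<in> V\<close> by (simp add: known_counts_def cnt_def fwd_def)
qed

lemma known_counts_blocks:
  assumes "1 \<le> k" "x \<in> V"
  shows "block_start (P i) (counts_at x k) = start i" "block_owner (P i) (counts_at x k) = owner i"
    "sum (counts_at x k) (P i) = edge_count i"
proof -
  have "\<forall>u\<in>P i. counts_at x k u = cnt u"
    using known_counts_eq[OF assms(1,2)] by (simp add: group_members_def)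
  thus "block_start (P i) (counts_at x k) = start i" "block_owner (P i) (counts_at x k) = owner i"
    "sum (counts_at x k) (P i) = edge_count i"
    by (simp_all add: block_start_cong block_owner_cong)
qed

definition group_edges :: "nat \<Rightarrow> (nat \<times> nat) set" where
  "group_edges i = Sigma (P i) fwd"

lemma edge_count_eq_card: "edge_count i = card (group_edges i)"
  using finite_P finite_fwd by (simp add: group_edges_def cnt_def)

lemma group_edges_le_edges_within: "card (group_edges i) \<le> card {e\<in>E. e \<subseteq> P i}"
proof (rule card_inj_on_le)
  show "inj_on (\<lambda>(u, w). {u, w}) (group_edges i)"
    by (rule inj_onI) (auto simp: group_edges_def mem_fwd doubleton_eq_iff)
  show "(\<lambda>(u, w). {u, w}) ` group_edges i \<subseteq> {e\<in>E. e \<subseteq> P i}"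
    by (auto simp: group_edges_def mem_fwd group_members_def)
  show "finite {e\<in>E. e \<subseteq> P i}" using finite_E by simp
qed

lemma edges_within_le: "finite S \<Longrightarrow> card {e\<in>E. e \<subseteq> S} \<le> a * card S"
  using edges_within_le_arboricity[OF finite_E] edge_card arboricity by auto

lemma card_P_mult_le: "card (P i) * a \<le> n + a - 1"
proof (rule card_residue_class_le)
  show "inj_on (rank V) (P i)"
    by (rule inj_onI) (metis vertex_of_rank_rank[OF finite_V] group_members_def mem_Collect_eq)
  show "\<forall>u\<in>P i. rank V u < n \<and> rank V u mod a = i"
    using rank_less_card[OF finite_V] by (auto simp: group_members_def group_def)
qed (use two_le_a in simp)

text \<open>The edges inside a group fit into two rounds of messages to its leader.\<close>
lemma edge_count_le_2n: "edge_count i \<le> 2 * n"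
proof (cases "2 \<le> card (P i)")
  case True
  have "edge_count i \<le> card (P i) * a"
    using edge_count_eq_card group_edges_le_edges_within edges_within_le[OF finite_P]
    by (metis le_trans mult.commute)
  moreover have "2 * a \<le> card (P i) * a" using True by simp
  ultimately show ?thesis using card_P_mult_le[of i] by linarith
next
  case False
  have "group_edges i = {}"
  proof (rule ccontr)
    assume "group_edges i \<noteq> {}"
    then obtain u w where "(u, w) \<in> group_edges i" by auto
    hence "u \<in> P i" "w \<in> P i" "u \<noteq> w" by (auto simp: group_edges_def mem_fwd group_members_def)
    hence "card {u, w} \<le> card (P i)" using finite_P by (intro card_mono) auto
    thus False using False \<open>u \<noteq> w\<close> by simp
  qed
  thus ?thesis using edge_count_eq_card by simp
qed

definition true_coloring :: "nat \<Rightarrow> nat \<Rightarrow> nat" where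
  "true_coloring i = some_coloring (P i) (group_edges i) (2 * a + 1)"

lemma true_coloring_proper:
  "(\<forall>u\<in>P i. true_coloring i u < 2 * a + 1) \<and>
   (\<forall>p\<in>group_edges i. true_coloring i (fst p) \<noteq> true_coloring i (snd p))"
proof -
  obtain col where col: "\<forall>u\<in>P i. col u < 2 * a + 1"
    "\<forall>u\<in>P i. \<forall>w\<in>P i. {u, w} \<in> E \<longrightarrow> col u \<noteq> col w"
    using sparse_graph_colorable[of E a "P i"] edge_card edges_within_le finite_P by blast
  have "\<forall>p\<in>group_edges i. col (fst p) \<noteq> col (snd p)"
  proof
    fix p assume "p \<in> group_edges i"
    then obtain u w where "p = (u, w)" "u \<in> P i" "w \<in> fwd u" by (auto simp: group_edges_def)
    thus "col (fst p) \<noteq> col (snd p)" using col(2) by (auto simp: mem_fwd group_members_def)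
  qed
  hence "\<exists>col. (\<forall>u\<in>P i. col u < 2 * a + 1) \<and> (\<forall>p\<in>group_edges i. col (fst p) \<noteq> col (snd p))"
    using col(1) by blast
  thus ?thesis unfolding true_coloring_def some_coloring_def by (rule someI_ex)
qed

definition edge_code :: "nat \<Rightarrow> nat \<Rightarrow> nat" where
  "edge_code i t = pair_code W (owner i t) (flist (owner i t) ! (t - start i (owner i t)))"

lemma owner_in_group:
  assumes "t < edge_count i"
  shows "owner i t \<in> P i" "t - start i (owner i t) < cnt (owner i t)"
  using block_owner_spec[OF finite_P assms] by auto

lemma send_round1:
  assumes "u \<in> V"
  shows "coloring_send c n a V u (nbrs E u) (hist 1 u) y =
    (let j = (rank V y + n - start (group V a u) u mod n) mod n in
     if j < cnt u then pair_code W u (flist u ! j) else 0)"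
  using known_counts_blocks(1)[of 1 u "group V a u"] assms
  by (simp add: coloring_send_def cnt_def fwd_def Let_def)

lemma relay_value_correct:
  assumes "x \<in> V" "t < edge_count i" "rank V x = t mod n" "2 \<le> k"
  shows "relay_value V a (counts_at x k) W x (nbrs E x) (hist k x ! 1) i t = edge_code i t"
proof -
  define u where "u = owner i t"
  have u: "u \<in> P i" "start i u \<le> t" "t - start i u < cnt u"
    using block_owner_spec[OF finite_P assms(2)] by (auto simp: u_def)
  have blocks: "block_start (P i) (counts_at x k) = start i" "block_owner (P i) (counts_at x k) = owner i"
    using known_counts_blocks assms(1,4) by auto
  show ?thesis
  proof (cases "u = x")
    case True
    thus ?thesis using blocks by (simp add: relay_value_def edge_code_def u_def Let_def)
  next
    case False
    have uV: "u \<in> V" and gu: "group V a u = i" using u(1) by (auto simp: group_members_def)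
    have "(rank V x + n - start i u mod n) mod n = (t - start i u) mod n"
      using assms(3) mod_diff_residues[OF n_pos u(2)] by simp
    also have "\<dots> = t - start i u" using u(3) cnt_less_n[OF uV] by simp
    finally have "(hist k x ! 1) u = pair_code W u (flist u ! (t - start i u))"
      using hist_nth[of 1 k x] assms(4) False uV send_round1[OF uV, of x] u(3) gu by (simp add: Let_def)
    thus ?thesis using blocks False by (simp add: relay_value_def edge_code_def u_def Let_def)
  qed
qed

lemma send_relay:
  assumes "z \<in> V" "q < 2"
  shows "coloring_send c n a V z (nbrs E z) (hist (2 + q) z) y =
    (if rank V y < a \<and> rank V z + q * n < edge_count (rank V y)
     then edge_code (rank V y) (rank V z + q * n) else 0)"
proof -
  have "(rank V z + q * n) mod n = rank V z" using rank_less_card[OF finite_V assms(1)] by simp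
  hence "rank V y < a \<and> rank V z + q * n < edge_count (rank V y) \<Longrightarrow>
    relay_value V a (counts_at z (2 + q)) W z (nbrs E z) (hist (2 + q) z ! 1) (rank V y) (rank V z + q * n) =
    edge_code (rank V y) (rank V z + q * n)"
    using relay_value_correct[OF assms(1)] by simp
  thus ?thesis using assms known_counts_blocks(3)[of "2 + q" z]
    by (auto simp: coloring_send_def Let_def)
qed

lemma leader_value_correct:
  assumes "x \<in> V" "rank V x < a" "4 \<le> k" "t < edge_count (rank V x)"
  shows "leader_value V a (counts_at x k) W x (nbrs E x) (hist k x) (rank V x) t = edge_code (rank V x) t"
proof -
  define z where "z = vertex_of_rank V (t mod n)"
  have zV: "z \<in> V" and rz: "rank V z = t mod n"
    using vertex_of_rank_in[OF finite_V] rank_vertex_of_rank[OF finite_V] n_pos by (simp_all add: z_def)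
  show ?thesis
  proof (cases "z = x")
    case True
    thus ?thesis using relay_value_correct[OF assms(1,4)] rz assms(3)
      by (simp add: leader_value_def z_def Let_def)
  next
    case False
    define q where "q = t div n"
    have "t < 2 * n" using edge_count_le_2n assms(4) by (metis less_le_trans)
    hence q: "q < 2" using n_pos by (simp add: q_def less_mult_imp_div_less mult.commute)
    have t: "rank V z + q * n = t" using rz by (simp add: q_def)
    have "(hist k x ! (2 + q)) z = edge_code (rank V x) t"
      using hist_nth[of "2 + q" k x] assms q False zV send_relay[OF zV q, of x] t by simp
    thus ?thesis using False by (simp add: leader_value_def z_def q_def Let_def)
  qed
qed

lemma decode_edge_code:
  assumes "t < edge_count i"
  shows "pair_decode W (edge_code i t) = (owner i t, flist (owner i t) ! (t - start i (owner i t)))"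
proof -
  have "flist (owner i t) ! (t - start i (owner i t)) \<in> fwd (owner i t)"
    using owner_in_group[OF assms] nth_flist_in_fwd by blast
  hence "flist (owner i t) ! (t - start i (owner i t)) < W" using fwd_subset ids_less_W by blast
  thus ?thesis by (simp add: edge_code_def pair_decode_code)
qed

lemma decoded_edge_codes: "(\<lambda>t. pair_decode W (edge_code i t)) ` {..<edge_count i} = group_edges i"
proof
  show "(\<lambda>t. pair_decode W (edge_code i t)) ` {..<edge_count i} \<subseteq> group_edges i"
    using decode_edge_code owner_in_group nth_flist_in_fwd by (auto simp: group_edges_def)
  show "group_edges i \<subseteq> (\<lambda>t. pair_decode W (edge_code i t)) ` {..<edge_count i}"
  proof
    fix p assume "p \<in> group_edges i"
    then obtain u w where p: "p = (u, w)" "u \<in> P i" "w \<in> fwd u" by (auto simp: group_edges_def)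
    then obtain j where j: "j < cnt u" "flist u ! j = w"
      using finite_fwd length_flist by (metis flist_eq in_set_conv_nth set_sorted_list_of_set)
    define t where "t = start i u + j"
    have t: "t < edge_count i"
      using block_end_le_sum[OF finite_P p(2), of cnt] j(1) by (simp add: t_def)
    have "owner i t = u" using block_owner_eqI[OF finite_P p(2)] j(1) by (simp add: t_def)
    hence "pair_decode W (edge_code i t) = p" using decode_edge_code[OF t] j p by (simp add: t_def)
    thus "p \<in> (\<lambda>t. pair_decode W (edge_code i t)) ` {..<edge_count i}" using t by force
  qed
qed

lemma leader_coloring_eq:
  assumes "x \<in> V" "rank V x < a" "4 \<le> k"
  shows "leader_coloring V a W x (nbrs E x) (hist k x) = true_coloring (rank V x)"
proof -
  have "collected_edges V a W x (nbrs E x) (hist k x) =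
    (\<lambda>t. pair_decode W (edge_code (rank V x) t)) ` {..<edge_count (rank V x)}"
    using known_counts_blocks(3)[of k x] leader_value_correct[OF assms] assms
    by (auto simp: collected_edges_def Let_def intro!: image_cong)
  thus ?thesis by (simp add: leader_coloring_def true_coloring_def decoded_edge_codes)
qed

lemma send_round4:
  assumes "x \<in> V"
  shows "coloring_send c n a V x (nbrs E x) (hist 4 x) y =
    (if rank V x < a \<and> group V a y = rank V x then true_coloring (rank V x) y + 1 else 0)"
  using leader_coloring_eq[OF assms] by (simp add: coloring_send_def Let_def)

lemma output_eq:
  assumes "v \<in> V"
  shows "coloring_out c n a V v (nbrs E v) (hist 5 v) =
    group V a v * (2 * a + 1) + true_coloring (group V a v) v + 1"
proof (cases "rank V v < a")
  case True
  hence "group V a v = rank V v" by (simp add: group_def)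
  thus ?thesis using True leader_coloring_eq[OF assms True] by (simp add: coloring_out_def Let_def)
next
  case False
  define i where "i = group V a v"
  have "i \<le> rank V v" by (simp add: i_def group_def)
  hence "i < n" using rank_less_card[OF finite_V assms] by linarith
  hence l: "vertex_of_rank V i \<in> V" "rank V (vertex_of_rank V i) = i"
    using vertex_of_rank_in rank_vertex_of_rank finite_V by auto
  moreover have "i < a" using group_less by (simp add: i_def)
  ultimately have "(hist 5 v ! 4) (vertex_of_rank V i) = true_coloring i v + 1"
    using hist_nth[of 4 5 v] send_round4[of "vertex_of_rank V i" v] False assms
    by (auto simp: i_def)
  thus ?thesis using False by (simp add: coloring_out_def i_def Let_def)
qed

lemma card_E_le: "card E \<le> n * n"
proof -
  have "E \<subseteq> (\<lambda>(x, y). {x, y}) ` (V \<times> V)"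
  proof
    fix e assume e: "e \<in> E"
    then obtain x y where "e = {x, y}" using edge_card by (metis card_2_iff)
    thus "e \<in> (\<lambda>(x, y). {x, y}) ` (V \<times> V)" using edge_subset[OF e] by force
  qed
  hence "card E \<le> card (V \<times> V)" using finite_V surj_card_le by (metis finite_SigmaI)
  thus ?thesis by (simp add: card_cartesian_product)
qed

abbreviation "msg_bound \<equiv> (max 2 n) ^ (2 * c + 4)"

lemma small_below_msg_bound:
  assumes "m \<le> 2 * (n * n) + 1"
  shows "m < msg_bound"
proof -
  define N where "N = max 2 n"
  have "4 \<le> N * N" using mult_le_mono[of 2 N 2 N] by (simp add: N_def)
  hence "2 * (N * N) + 1 < N * N * (N * N)" using mult_le_mono1[of 4 "N * N" "N * N"] by linarith
  moreover have "n * n \<le> N * N" using mult_le_mono[of n N n N] by (simp add: N_def)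
  moreover have "N * N * (N * N) \<le> N ^ (2 * c + 4)"
    using power_increasing[of 4 "2 * c + 4" N] by (simp add: N_def power4_eq_xxxx mult.assoc)
  ultimately show ?thesis using assms by (simp add: N_def)
qed

lemma pair_code_below_msg_bound:
  assumes "x < W" "y < W"
  shows "pair_code W x y < msg_bound"
proof -
  have "pair_code W x y \<le> W * W" using pair_code_le[OF assms] .
  also have "\<dots> < W * W * (max 2 n) ^ 4"
    using assms one_less_power[of "max 2 n" 4] by auto
  also have "\<dots> = msg_bound" by (simp add: power_add power_mult power2_eq_square mult.commute)
  finally show ?thesis .
qed

lemma edge_code_below_msg_bound:
  assumes "t < edge_count i"
  shows "edge_code i t < msg_bound"
proof -
  have "owner i t \<in> V" using owner_in_group(1)[OF assms] by (simp add: group_members_def)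
  moreover have "flist (owner i t) ! (t - start i (owner i t)) \<in> V"
    using owner_in_group(2)[OF assms] nth_flist_in_fwd fwd_subset by blast
  ultimately show ?thesis unfolding edge_code_def using ids_less_W by (intro pair_code_below_msg_bound)
qed

lemma message_bound:
  assumes "r < 5" "u \<in> V" "v \<in> V"
  shows "coloring_send c n a V u (nbrs E u) (hist r u) v < msg_bound"
proof -
  have "r = 0 \<or> r = 1 \<or> (r - 2 < 2 \<and> r = 2 + (r - 2)) \<or> r = 4" using assms(1) by auto
  then consider "r = 0" | "r = 1" | q where "q < 2" "r = 2 + q" | "r = 4" by blast
  thus ?thesis
  proof cases
    case 1
    have "n \<le> n * n" by (rule le_square)
    hence "cnt u \<le> 2 * (n * n) + 1" using cnt_less_n[OF assms(2)] by linarith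
    thus ?thesis using 1 by (simp add: coloring_send_def cnt_def fwd_def small_below_msg_bound)
  next
    case 2
    have "flist u ! j < W" if "j < cnt u" for j using nth_flist_in_fwd[OF that] fwd_subset ids_less_W by blast
    thus ?thesis using 2 send_round1[OF assms(2), of v] ids_less_W[OF assms(2)]
      by (auto simp: Let_def pair_code_below_msg_bound)
  next
    case (3 q)
    thus ?thesis using send_relay[OF assms(2) \<open>q < 2\<close>, of v] edge_code_below_msg_bound by auto
  next
    case 4
    have "true_coloring (rank V u) v + 1 \<le> 2 * a + 1"
      if "group V a v = rank V u"
    proof -
      have "v \<in> P (rank V u)" using assms(3) that by (simp add: group_members_def)
      thus ?thesis using true_coloring_proper by fastforce
    qed
    moreover have "a \<le> n * n" using arboricity_le_card[OF finite_E] card_E_le arboricity by simp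
    ultimately show ?thesis using 4 send_round4[OF assms(2), of v] small_below_msg_bound by auto
  qed
qed

lemma output_proper: "proper_coloring V E (\<lambda>v. coloring_out c n a V v (nbrs E v) (hist 5 v)) (5 * a ^ 2)"
  unfolding proper_coloring_def
proof (intro conjI ballI allI impI)
  fix v assume v: "v \<in> V"
  define i where "i = group V a v"
  have "i < a" using group_less by (simp add: i_def)
  moreover have "true_coloring i v < 2 * a + 1"
    using true_coloring_proper v by (fastforce simp: i_def group_members_def)
  ultimately have "i * (2 * a + 1) + true_coloring i v + 1 \<le> a * (2 * a + 1)"
    using mult_le_mono1[of "i + 1" a "2 * a + 1"] by (simp add: algebra_simps)
  also have "\<dots> \<le> 5 * a ^ 2" by (simp add: power2_eq_square algebra_simps)
  finally show "coloring_out c n a V v (nbrs E v) (hist 5 v) \<in> {1..5 * a ^ 2}"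
    using output_eq[OF v] by (simp add: i_def)
next
  fix u v assume e: "{u, v} \<in> E"
  have uv: "u \<in> V" "v \<in> V" "u \<noteq> v" using edge_ends[OF e] by auto
  let ?K = "2 * a + 1"
  have col: "true_coloring (group V a x) x < ?K" if "x \<in> V" for x
    using true_coloring_proper that by (fastforce simp: group_members_def)
  show "coloring_out c n a V u (nbrs E u) (hist 5 u) \<noteq> coloring_out c n a V v (nbrs E v) (hist 5 v)"
  proof
    assume "coloring_out c n a V u (nbrs E u) (hist 5 u) = coloring_out c n a V v (nbrs E v) (hist 5 v)"
    hence eq: "group V a u * ?K + true_coloring (group V a u) u = group V a v * ?K + true_coloring (group V a v) v"
      using output_eq uv by simp
    have div_eq: "(g * K + r) div K = g" if "r < K" for g r K :: nat
      using that by simp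
    have "(group V a x * ?K + true_coloring (group V a x) x) div ?K = group V a x" if "x \<in> V" for x
      using div_eq[OF col[OF that]] .
    hence "group V a u = group V a v" using eq uv by metis
    moreover from this have "true_coloring (group V a u) u = true_coloring (group V a u) v"
      using eq by simp
    moreover have "(u, v) \<in> group_edges (group V a u) \<or> (v, u) \<in> group_edges (group V a u)"
      using calculation(1) uv e by (auto simp: group_edges_def group_members_def mem_fwd insert_commute)
    ultimately show False using true_coloring_proper by fastforce
  qed
qed

end

lemma five_rounds_within_budget:
  assumes "2 \<le> a"
  shows "real 5 \<le> real 5 * (log 2 (real a) + real k)"
proof -
  have "1 \<le> log 2 (real a)" using assms by simp
  thus ?thesis by simp
qed

theorem theorem3:
  shows "\<forall>c::nat. \<exists>(C::nat) (B::nat) (send::cc_send) (out::cc_out) (T::nat \<Rightarrow> nat \<Rightarrow> nat).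
    \<forall>(V::nat set) (E::nat set set) (a::nat).
      finite V \<and> V \<noteq> {} \<and> V \<subseteq> {..< (max 2 (card V)) ^ c} \<and>
      simple_graph V E \<and> arboricity E = a \<and> a \<ge> 2 \<longrightarrow>
        real (T (card V) a) \<le> real C * (log 2 (real a) + real (log_star (card V))) \<and>
        (\<forall>r < T (card V) a. \<forall>u\<in>V. \<forall>v\<in>V. u \<noteq> v \<longrightarrow>
           send (card V) a V u (nbrs E u) (cc_hist send a V E r u) v < (max 2 (card V)) ^ B) \<and>
        proper_coloring V E
          (\<lambda>v. out (card V) a V v (nbrs E v) (cc_hist send a V E (T (card V) a) v))
          (C * a ^ 2)"
proof (rule allI, goal_cases)
  case (1 c)
  show ?case
  proof (rule exI[of _ 5], rule exI[of _ "2 * c + 4"], rule exI[of _ "coloring_send c"],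
      rule exI[of _ "coloring_out c"], rule exI[of _ "\<lambda>_ _. 5"], intro allI impI, goal_cases)
    case (1 V E a)
    then interpret coloring_run c V E a by unfold_locales auto
    show ?case using five_rounds_within_budget two_le_a message_bound output_proper by simp
  qed
qed

end
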